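(* In a finite-horizon MDP with wealth levels as described in the context, for the lower $\tau$-quantile criterion ($\tau\in(0,1]$) and for the upper $\tau$-quantile criterion ($\tau\in[0,1)$), there exists a deterministic wealth-Markovian policy that is optimal among all policies at horizon $T$.
   Context: An MDP $(\mathcal S,\mathcal A,\mathcal P,r,s_0)$ has finite state set, finite action set, transition probabilities, reward function $r:\mathcal S\times\mathcal A\to\mathcal R$, initial state $s_0$, and finite horizon $T$; policies are sequences of $T$ decision rules, in general history-dependent and randomized. The wealth of a history is $w(h_0)=w_0$, $w(h_t)=w(h_{t-1})\circ r(s_{t-1},a_{t-1})$ for a binary operation $\circ$ with left identity $w_0$. The set $\mathcal W_T$ of wealth levels of $T$-histories is totally ordered by $\preceq_{\mathcal W}$ with least and greatest elements. For a policy $\pi$, $p^\pi(w)$ is the probability that the generated $T$-history has wealth $w$; $F^\pi(w)=\sum_{w'\preceq_{\mathcal W}w}p^\pi(w')$, $G^\pi(w)=\sum_{w\preceq_{\mathcal W}w'}p^\pi(w')$. Lower $\tau$-quantile $\underline{q}^\pi_\tau=\min\{w:F^\pi(w)\ge\tau\}$, upper $\tau$-quantile $\overline{q}^\pi_\tau=\max\{w:G^\pi(w)\ge1-\tau\}$; a policy $\pi^*$ is optimal for the lower (resp. upper) criterion if its lower (resp. upper) $\tau$-quantile equals the maximum over all policies. A policy is deterministic wealth-Markovian if each of its decision rules deterministically selects an action as a function of the current state $s_t$ and the current wealth level $w(h_t)$ only. *)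

theory Defs
  imports "HOL-Analysis.Analysis"
begin

text \<open>The reward type 'r also carries the wealth levels: wealth is accumulated by a binary
  operation wop with left identity w0, and leW is the order on wealth levels.\<close>

record ('s, 'a, 'r) mdp =
  trans :: "'s \<Rightarrow> 'a \<Rightarrow> 's \<Rightarrow> real"
  rew   :: "'s \<Rightarrow> 'a \<Rightarrow> 'r"
  init  :: 's
  wop   :: "'r \<Rightarrow> 'r \<Rightarrow> 'r"
  w0    :: 'r
  leW   :: "'r \<Rightarrow> 'r \<Rightarrow> bool"

definition valid_mdp :: "('s::finite, 'a::finite, 'r) mdp \<Rightarrow> bool" where
  "valid_mdp M \<longleftrightarrow>
     (\<forall>s a s'. 0 \<le> trans M s a s') \<and> (\<forall>s a. (\<Sum>s'\<in>UNIV. trans M s a s') = 1) \<and>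
     (\<forall>x. wop M (w0 M) x = x)"

text \<open>A t-history s_0,a_0,...,a_{t-1},s_t is a pair (ss, as) with length ss = t+1,
  length as = t. T-histories start in the initial state.\<close>

definition histories :: "('s, 'a, 'r) mdp \<Rightarrow> nat \<Rightarrow> ('s list \<times> 'a list) set" where
  "histories M T = {(ss, as). length ss = Suc T \<and> length as = T \<and> hd ss = init M}"

definition wealth :: "('s, 'a, 'r) mdp \<Rightarrow> 's list \<Rightarrow> 'a list \<Rightarrow> 'r" where
  "wealth M ss as = foldl (\<lambda>w (s, a). wop M w (rew M s a)) (w0 M) (zip ss as)"

definition wealth_levels :: "('s, 'a, 'r) mdp \<Rightarrow> nat \<Rightarrow> 'r set" where
  "wealth_levels M T = (\<lambda>(ss, as). wealth M ss as) ` histories M T"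

definition wealth_order_ok :: "('s, 'a, 'r) mdp \<Rightarrow> nat \<Rightarrow> bool" where
  "wealth_order_ok M T \<longleftrightarrow>
     (let W = wealth_levels M T; le = leW M in
       (\<forall>x\<in>W. le x x) \<and>
       (\<forall>x\<in>W. \<forall>y\<in>W. le x y \<and> le y x \<longrightarrow> x = y) \<and>
       (\<forall>x\<in>W. \<forall>y\<in>W. \<forall>z\<in>W. le x y \<and> le y z \<longrightarrow> le x z) \<and>
       (\<forall>x\<in>W. \<forall>y\<in>W. le x y \<or> le y x) \<and>
       (\<exists>m\<in>W. \<forall>x\<in>W. le m x) \<and> (\<exists>m\<in>W. \<forall>x\<in>W. le x m))"

text \<open>A (history-dependent, randomized) policy: pi ss as a is the probability of choosing
  action a after history (ss, as); the decision rule at time t = length as.\<close>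

type_synonym ('s, 'a) policy = "'s list \<Rightarrow> 'a list \<Rightarrow> 'a \<Rightarrow> real"

definition valid_policy :: "nat \<Rightarrow> ('s, 'a::finite) policy \<Rightarrow> bool" where
  "valid_policy T \<pi> \<longleftrightarrow>
     (\<forall>ss as. length ss = Suc (length as) \<and> length as < T \<longrightarrow>
        (\<forall>a. 0 \<le> \<pi> ss as a) \<and> (\<Sum>a\<in>UNIV. \<pi> ss as a) = 1)"

definition hist_prob :: "('s, 'a, 'r) mdp \<Rightarrow> ('s, 'a) policy \<Rightarrow> 's list \<Rightarrow> 'a list \<Rightarrow> real" where
  "hist_prob M \<pi> ss as =
     (\<Prod>t<length as. \<pi> (take (Suc t) ss) (take t as) (as ! t) * trans M (ss ! t) (as ! t) (ss ! Suc t))"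

definition wprob :: "('s, 'a, 'r) mdp \<Rightarrow> nat \<Rightarrow> ('s, 'a) policy \<Rightarrow> 'r \<Rightarrow> real" where
  "wprob M T \<pi> w = (\<Sum>(ss, as)\<in>{h \<in> histories M T. (\<lambda>(ss, as). wealth M ss as) h = w}. hist_prob M \<pi> ss as)"

definition cdfW :: "('s, 'a, 'r) mdp \<Rightarrow> nat \<Rightarrow> ('s, 'a) policy \<Rightarrow> 'r \<Rightarrow> real" where
  "cdfW M T \<pi> w = (\<Sum>w'\<in>{w' \<in> wealth_levels M T. leW M w' w}. wprob M T \<pi> w')"

definition ccdfW :: "('s, 'a, 'r) mdp \<Rightarrow> nat \<Rightarrow> ('s, 'a) policy \<Rightarrow> 'r \<Rightarrow> real" where
  "ccdfW M T \<pi> w = (\<Sum>w'\<in>{w' \<in> wealth_levels M T. leW M w w'}. wprob M T \<pi> w')"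

definition lower_quantile :: "('s, 'a, 'r) mdp \<Rightarrow> nat \<Rightarrow> ('s, 'a) policy \<Rightarrow> real \<Rightarrow> 'r" where
  "lower_quantile M T \<pi> \<tau> =
     (THE w. w \<in> wealth_levels M T \<and> \<tau> \<le> cdfW M T \<pi> w \<and>
        (\<forall>w'\<in>wealth_levels M T. \<tau> \<le> cdfW M T \<pi> w' \<longrightarrow> leW M w w'))"

definition upper_quantile :: "('s, 'a, 'r) mdp \<Rightarrow> nat \<Rightarrow> ('s, 'a) policy \<Rightarrow> real \<Rightarrow> 'r" where
  "upper_quantile M T \<pi> \<tau> =
     (THE w. w \<in> wealth_levels M T \<and> 1 - \<tau> \<le> ccdfW M T \<pi> w \<and>
        (\<forall>w'\<in>wealth_levels M T. 1 - \<tau> \<le> ccdfW M T \<pi> w' \<longrightarrow> leW M w' w))"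

definition lower_optimal :: "('s, 'a::finite, 'r) mdp \<Rightarrow> nat \<Rightarrow> real \<Rightarrow> ('s, 'a) policy \<Rightarrow> bool" where
  "lower_optimal M T \<tau> \<pi> \<longleftrightarrow> valid_policy T \<pi> \<and>
     (\<forall>\<pi>'. valid_policy T \<pi>' \<longrightarrow> leW M (lower_quantile M T \<pi>' \<tau>) (lower_quantile M T \<pi> \<tau>))"

definition upper_optimal :: "('s, 'a::finite, 'r) mdp \<Rightarrow> nat \<Rightarrow> real \<Rightarrow> ('s, 'a) policy \<Rightarrow> bool" where
  "upper_optimal M T \<tau> \<pi> \<longleftrightarrow> valid_policy T \<pi> \<and>
     (\<forall>\<pi>'. valid_policy T \<pi>' \<longrightarrow> leW M (upper_quantile M T \<pi>' \<tau>) (upper_quantile M T \<pi> \<tau>))"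

definition det_wealth_markov :: "('s, 'a, 'r) mdp \<Rightarrow> nat \<Rightarrow> ('s, 'a) policy \<Rightarrow> bool" where
  "det_wealth_markov M T \<pi> \<longleftrightarrow>
     (\<exists>\<delta> :: nat \<Rightarrow> 's \<Rightarrow> 'r \<Rightarrow> 'a. \<forall>ss as a. length ss = Suc (length as) \<and> length as < T \<longrightarrow>
        \<pi> ss as a = (if a = \<delta> (length as) (last ss) (wealth M ss as) then 1 else 0))"

end

theory Submission
  imports Defs
begin

text \<open>Whether the \<open>\<tau>\<close>-quantile of a policy's terminal wealth is at least a given level \<open>v\<close>
  depends on a single expected utility of terminal wealth: the probability of ending strictly
  below \<open>v\<close> (lower quantile) or at least at \<open>v\<close> (upper quantile). Expected utilities of
  terminal wealth are maximised by backward induction on the state augmented with the wealth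
  accumulated so far, and the greedy policy of that recursion is deterministic and
  wealth-Markovian. Since \<open>W\<^sub>T\<close> is finite, some policy attains the largest quantile \<open>v\<^sup>*\<close>;
  the greedy policy for the utility belonging to \<open>v\<^sup>*\<close> does at least as well, so its quantile is
  at least \<open>v\<^sup>*\<close>.\<close>

lemma arg_max_eq_Max_range:
  fixes g :: "'a::finite \<Rightarrow> 'b::linorder"
  shows "g (arg_max g (\<lambda>_. True)) = Max (range g)"
proof -
  have "Max (range g) \<in> range g" by (rule Max_in) auto
  then obtain k where k: "Max (range g) = g k" by blast
  then have "g x \<le> g k" for x
    using Max_ge[of "range g" "g x"] by simp
  then show ?thesis
    unfolding k by (intro arg_max_equality) auto
qed

lemma wealth_snoc:
  assumes "length ss = Suc (length as)"
  shows "wealth M (ss @ [s']) (as @ [a]) = wop M (wealth M ss as) (rew M (last ss) a)"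
proof -
  have "ss \<noteq> []" using assms by auto
  then have ss: "ss = butlast ss @ [last ss]" by simp
  have len: "length (butlast ss) = length as" using assms by simp
  have "zip (ss @ [s']) (as @ [a]) = zip (butlast ss) as @ [(last ss, a)]"
    and "zip ss as = zip (butlast ss) as"
    by (subst ss; simp add: len zip_append1 assms)+
  then show ?thesis unfolding wealth_def by simp
qed

lemma hist_prob_snoc:
  assumes "length ss = Suc (length as)"
  shows "hist_prob M \<pi> (ss @ [s']) (as @ [a]) = hist_prob M \<pi> ss as * (\<pi> ss as a * trans M (last ss) a s')"
proof -
  have "(\<Prod>t<length as. \<pi> (take (Suc t) (ss @ [s'])) (take t (as @ [a])) ((as @ [a]) ! t) *
          trans M ((ss @ [s']) ! t) ((as @ [a]) ! t) ((ss @ [s']) ! Suc t)) = hist_prob M \<pi> ss as"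
    unfolding hist_prob_def by (rule prod.cong) (use assms in \<open>auto simp: nth_append\<close>)
  moreover have "last ss = ss ! length as"
    using assms by (metis last_conv_nth diff_Suc_1 list.size(3) nat.distinct(1))
  ultimately show ?thesis
    using assms by (simp add: hist_prob_def nth_append)
qed

lemma histories_0: "histories M 0 = {([init M], [])}"
  unfolding histories_def by (auto simp: length_Suc_conv)

lemma histories_Suc:
  "histories M (Suc k) = (\<lambda>((ss, as), a, s'). (ss @ [s'], as @ [a])) ` (histories M k \<times> UNIV)"
proof (intro set_eqI iffI)
  fix h assume h: "h \<in> histories M (Suc k)"
  obtain ss as where h_eq: "h = (ss, as)" by (cases h)
  have len: "length ss = Suc (Suc k)" "length as = Suc k" and hd: "hd ss = init M"
    using h h_eq by (auto simp: histories_def)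
  then have "ss = butlast ss @ [last ss]" "as = butlast as @ [last as]" "butlast ss \<noteq> []"
    by (auto simp: length_Suc_conv)
  moreover from this have "(butlast ss, butlast as) \<in> histories M k"
    using len hd by (simp add: histories_def) (metis hd_append2)
  ultimately show "h \<in> (\<lambda>((ss, as), a, s'). (ss @ [s'], as @ [a])) ` (histories M k \<times> UNIV)"
    using h_eq by (auto intro!: image_eqI[where x = "((butlast ss, butlast as), last as, last ss)"])
qed (auto simp: histories_def hd_append)

lemma finite_histories: "finite (histories (M :: ('s::finite, 'a::finite, 'r) mdp) T)"
proof (rule finite_subset)
  show "histories M T \<subseteq> {ss. set ss \<subseteq> UNIV \<and> length ss = Suc T} \<times> {as. set as \<subseteq> UNIV \<and> length as = T}"
    by (auto simp: histories_def)
qed (intro finite_cartesian_product finite_lists_length_eq finite)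

lemma sum_histories_Suc:
  fixes M :: "('s::finite, 'a::finite, 'r) mdp"
  shows "(\<Sum>(ss, as)\<in>histories M (Suc k). hist_prob M \<pi> ss as * g ss as) =
    (\<Sum>(ss, as)\<in>histories M k. hist_prob M \<pi> ss as *
       (\<Sum>a\<in>UNIV. \<pi> ss as a * (\<Sum>s'\<in>UNIV. trans M (last ss) a s' * g (ss @ [s']) (as @ [a]))))"
proof -
  let ?snoc = "\<lambda>((ss, as), a, s'). (ss @ [s'], as @ [a])"
  let ?G = "\<lambda>(ss, as). hist_prob M \<pi> ss as * g ss as"
  have "inj_on ?snoc (histories M k \<times> UNIV)" by (auto simp: inj_on_def)
  then have "(\<Sum>h\<in>histories M (Suc k). ?G h) = (\<Sum>x\<in>histories M k \<times> UNIV. ?G (?snoc x))"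
    unfolding histories_Suc by (simp add: sum.reindex)
  also have "\<dots> = (\<Sum>h\<in>histories M k. \<Sum>a\<in>UNIV. \<Sum>s'\<in>UNIV. ?G (?snoc (h, a, s')))"
    by (simp add: sum.cartesian_product split_def UNIV_Times_UNIV[symmetric] del: UNIV_Times_UNIV)
  also have "\<dots> = (\<Sum>(ss, as)\<in>histories M k. hist_prob M \<pi> ss as *
       (\<Sum>a\<in>UNIV. \<pi> ss as a * (\<Sum>s'\<in>UNIV. trans M (last ss) a s' * g (ss @ [s']) (as @ [a]))))"
    by (rule sum.cong) (auto simp: histories_def hist_prob_snoc sum_distrib_left mult_ac)
  finally show ?thesis by (simp add: case_prod_beta)
qed

subsection \<open>Dynamic programming on the wealth-augmented state\<close>

definition expected_utility ::
    "('s::finite, 'a::finite, 'r) mdp \<Rightarrow> nat \<Rightarrow> ('s, 'a) policy \<Rightarrow> ('r \<Rightarrow> real) \<Rightarrow> real" where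
  "expected_utility M T \<pi> f = (\<Sum>(ss, as)\<in>histories M T. hist_prob M \<pi> ss as * f (wealth M ss as))"

fun policy_value ::
    "('s::finite, 'a::finite, 'r) mdp \<Rightarrow> ('s, 'a) policy \<Rightarrow> ('r \<Rightarrow> real) \<Rightarrow> nat \<Rightarrow> 's list \<Rightarrow> 'a list \<Rightarrow> real" where
  "policy_value M \<pi> f 0 ss as = f (wealth M ss as)"
| "policy_value M \<pi> f (Suc n) ss as =
     (\<Sum>a\<in>UNIV. \<pi> ss as a * (\<Sum>s'\<in>UNIV. trans M (last ss) a s' * policy_value M \<pi> f n (ss @ [s']) (as @ [a])))"

definition lookahead ::
    "('s::finite, 'a, 'r) mdp \<Rightarrow> ('s \<Rightarrow> 'r \<Rightarrow> real) \<Rightarrow> 's \<Rightarrow> 'r \<Rightarrow> 'a \<Rightarrow> real" where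
  "lookahead M u s w a = (\<Sum>s'\<in>UNIV. trans M s a s' * u s' (wop M w (rew M s a)))"

fun optimal_value :: "('s::finite, 'a::finite, 'r) mdp \<Rightarrow> ('r \<Rightarrow> real) \<Rightarrow> nat \<Rightarrow> 's \<Rightarrow> 'r \<Rightarrow> real" where
  "optimal_value M f 0 s w = f w"
| "optimal_value M f (Suc n) s w = Max (range (lookahead M (optimal_value M f n) s w))"

definition greedy_action :: "('s::finite, 'a::finite, 'r) mdp \<Rightarrow> ('r \<Rightarrow> real) \<Rightarrow> nat \<Rightarrow> 's \<Rightarrow> 'r \<Rightarrow> 'a" where
  "greedy_action M f n s w = arg_max (lookahead M (optimal_value M f n) s w) (\<lambda>_. True)"

text \<open>At time \<open>length as\<close>, \<open>T - Suc (length as)\<close> steps remain after the current decision.\<close>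

definition greedy_policy :: "('s::finite, 'a::finite, 'r) mdp \<Rightarrow> ('r \<Rightarrow> real) \<Rightarrow> nat \<Rightarrow> ('s, 'a) policy" where
  "greedy_policy M f T ss as a =
     (if a = greedy_action M f (T - Suc (length as)) (last ss) (wealth M ss as) then 1 else 0)"

lemma optimal_value_Suc_greedy:
  "optimal_value M f (Suc n) s w = lookahead M (optimal_value M f n) s w (greedy_action M f n s w)"
  by (simp add: greedy_action_def arg_max_eq_Max_range)

lemma lookahead_le_optimal_value:
  "lookahead M (optimal_value M f n) s w a \<le> optimal_value M f (Suc n) s w"
  by simp

lemma greedy_policy_valid: "valid_policy T (greedy_policy M f T)"
  unfolding valid_policy_def greedy_policy_def by (simp add: if_distrib cong: if_cong)

lemma greedy_policy_det_wealth_markov: "det_wealth_markov M T (greedy_policy M f T)"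
  unfolding det_wealth_markov_def greedy_policy_def
  by (rule exI[where x = "\<lambda>k. greedy_action M f (T - Suc k)"]) simp

lemma expected_utility_eq_sum_policy_value:
  fixes M :: "('s::finite, 'a::finite, 'r) mdp"
  shows "k + n = T \<Longrightarrow>
    expected_utility M T \<pi> f = (\<Sum>(ss, as)\<in>histories M k. hist_prob M \<pi> ss as * policy_value M \<pi> f n ss as)"
proof (induction n arbitrary: k)
  case 0
  then show ?case by (simp add: expected_utility_def)
next
  case (Suc n)
  then have "expected_utility M T \<pi> f =
      (\<Sum>(ss, as)\<in>histories M (Suc k). hist_prob M \<pi> ss as * policy_value M \<pi> f n ss as)"
    by simp
  then show ?case by (simp add: sum_histories_Suc)
qed

lemma expected_utility_eq_policy_value:
  "expected_utility M T \<pi> f = policy_value M \<pi> f T [init M] []"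
  using expected_utility_eq_sum_policy_value[of 0 T T M \<pi> f] by (simp add: histories_0 hist_prob_def)

lemma policy_value_le_optimal_value:
  fixes M :: "('s::finite, 'a::finite, 'r) mdp"
  assumes M: "valid_mdp M" and \<pi>: "valid_policy T \<pi>"
  shows "length ss = Suc (length as) \<Longrightarrow> length as + n \<le> T \<Longrightarrow>
    policy_value M \<pi> f n ss as \<le> optimal_value M f n (last ss) (wealth M ss as)"
proof (induction n arbitrary: ss as)
  case 0
  then show ?case by simp
next
  case (Suc n)
  let ?u = "optimal_value M f n" and ?w = "wealth M ss as"
  have \<pi>_nonneg: "0 \<le> \<pi> ss as a" and \<pi>_sum: "(\<Sum>a\<in>UNIV. \<pi> ss as a) = 1" for a
    using \<pi> Suc.prems unfolding valid_policy_def by auto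
  have "(\<Sum>s'\<in>UNIV. trans M (last ss) a s' * policy_value M \<pi> f n (ss @ [s']) (as @ [a]))
      \<le> lookahead M ?u (last ss) ?w a" for a
    unfolding lookahead_def
  proof (rule sum_mono, rule mult_left_mono)
    fix s'
    show "policy_value M \<pi> f n (ss @ [s']) (as @ [a]) \<le> ?u s' (wop M ?w (rew M (last ss) a))"
      using Suc.IH[of "ss @ [s']" "as @ [a]"] Suc.prems by (simp add: wealth_snoc)
    show "0 \<le> trans M (last ss) a s'"
      using M unfolding valid_mdp_def by auto
  qed
  also have "lookahead M ?u (last ss) ?w a \<le> optimal_value M f (Suc n) (last ss) ?w" for a
    by (rule lookahead_le_optimal_value)
  finally have "policy_value M \<pi> f (Suc n) ss as \<le> (\<Sum>a\<in>UNIV. \<pi> ss as a * optimal_value M f (Suc n) (last ss) ?w)"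
    unfolding policy_value.simps by (intro sum_mono mult_left_mono \<pi>_nonneg)
  also have "\<dots> = optimal_value M f (Suc n) (last ss) ?w"
    by (simp add: \<pi>_sum flip: sum_distrib_right)
  finally show ?case .
qed

lemma policy_value_greedy_policy:
  fixes M :: "('s::finite, 'a::finite, 'r) mdp"
  shows "length ss = Suc (length as) \<Longrightarrow> length as + n = T \<Longrightarrow>
    policy_value M (greedy_policy M f T) f n ss as = optimal_value M f n (last ss) (wealth M ss as)"
proof (induction n arbitrary: ss as)
  case 0
  then show ?case by simp
next
  case (Suc n)
  have remaining: "T - Suc (length as) = n" using Suc.prems by simp
  have "(\<Sum>s'\<in>UNIV. trans M (last ss) a s' * policy_value M (greedy_policy M f T) f n (ss @ [s']) (as @ [a]))
      = lookahead M (optimal_value M f n) (last ss) (wealth M ss as) a" for a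
    unfolding lookahead_def using Suc by (simp add: wealth_snoc)
  moreover have "greedy_policy M f T ss as a =
      (if a = greedy_action M f n (last ss) (wealth M ss as) then 1 else 0)" for a
    by (simp add: greedy_policy_def remaining)
  ultimately have "policy_value M (greedy_policy M f T) f (Suc n) ss as =
      (\<Sum>a\<in>UNIV. (if a = greedy_action M f n (last ss) (wealth M ss as) then 1 else 0) *
         lookahead M (optimal_value M f n) (last ss) (wealth M ss as) a)"
    by (simp only: policy_value.simps)
  then show ?case
    by (simp add: optimal_value_Suc_greedy if_distrib[where f = "\<lambda>c. c * _"] cong: if_cong
        del: optimal_value.simps)
qed

lemma greedy_policy_maximizes_expected_utility:
  fixes M :: "('s::finite, 'a::finite, 'r) mdp"
  assumes "valid_mdp M" "valid_policy T \<pi>"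
  shows "expected_utility M T \<pi> f \<le> expected_utility M T (greedy_policy M f T) f"
  using policy_value_le_optimal_value[OF assms, of "[init M]" "[]" T f]
    policy_value_greedy_policy[where ss = "[init M]" and as = "[]" and n = T and M = M]
  by (simp add: expected_utility_eq_policy_value)

lemma policy_value_const:
  fixes M :: "('s::finite, 'a::finite, 'r) mdp"
  assumes M: "valid_mdp M" and \<pi>: "valid_policy T \<pi>"
  shows "length ss = Suc (length as) \<Longrightarrow> length as + n \<le> T \<Longrightarrow> policy_value M \<pi> (\<lambda>_. c) n ss as = c"
proof (induction n arbitrary: ss as)
  case (Suc n)
  moreover have "(\<Sum>a\<in>UNIV. \<pi> ss as a) = 1"
    using \<pi> Suc.prems unfolding valid_policy_def by auto
  moreover have "(\<Sum>s'\<in>UNIV. trans M s a s') = 1" for s a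
    using M unfolding valid_mdp_def by auto
  ultimately show ?case
    by (simp flip: sum_distrib_left sum_distrib_right)
qed simp

lemma expected_utility_uminus: "expected_utility M T \<pi> (\<lambda>w. - f w) = - expected_utility M T \<pi> f"
  unfolding expected_utility_def by (simp add: case_prod_beta sum_negf)

lemma hist_prob_nonneg:
  assumes "valid_mdp M" "valid_policy T \<pi>" "(ss, as) \<in> histories M T"
  shows "0 \<le> hist_prob M \<pi> ss as"
  unfolding hist_prob_def
proof (intro prod_nonneg mult_nonneg_nonneg)
  fix t assume "t \<in> {..<length as}"
  then show "0 \<le> \<pi> (take (Suc t) ss) (take t as) (as ! t)"
    using assms(2,3) unfolding valid_policy_def histories_def by auto
  show "0 \<le> trans M (ss ! t) (as ! t) (ss ! Suc t)"
    using assms(1) unfolding valid_mdp_def by auto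
qed

lemma wprob_nonneg: "valid_mdp M \<Longrightarrow> valid_policy T \<pi> \<Longrightarrow> 0 \<le> wprob M T \<pi> w"
  unfolding wprob_def by (intro sum_nonneg) (auto intro: hist_prob_nonneg)

lemma sum_wprob_eq_expected_utility:
  fixes M :: "('s::finite, 'a::finite, 'r) mdp"
  shows "(\<Sum>w\<in>{w\<in>wealth_levels M T. R w}. wprob M T \<pi> w) =
    expected_utility M T \<pi> (\<lambda>w. if R w then 1 else 0)"
proof -
  let ?H = "histories M T" and ?wealth = "\<lambda>(ss, as). wealth M ss as"
    and ?p = "\<lambda>(ss, as). hist_prob M \<pi> ss as"
  have "expected_utility M T \<pi> (\<lambda>w. if R w then 1 else 0) = (\<Sum>h\<in>{h\<in>?H. R (?wealth h)}. ?p h)"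
    unfolding expected_utility_def
    by (simp add: sum.inter_filter[OF finite_histories] case_prod_beta if_distrib cong: if_cong)
  also have "\<dots> = (\<Sum>w\<in>{w\<in>wealth_levels M T. R w}. \<Sum>h\<in>{h\<in>{h\<in>?H. R (?wealth h)}. ?wealth h = w}. ?p h)"
    by (rule sum.group[symmetric]) (auto simp: finite_histories wealth_levels_def)
  also have "\<dots> = (\<Sum>w\<in>{w\<in>wealth_levels M T. R w}. wprob M T \<pi> w)"
    unfolding wprob_def by (intro sum.cong) auto
  finally show ?thesis ..
qed

lemma sum_wprob_eq_1:
  fixes M :: "('s::finite, 'a::finite, 'r) mdp"
  assumes "valid_mdp M" "valid_policy T \<pi>"
  shows "sum (wprob M T \<pi>) (wealth_levels M T) = 1"
  using sum_wprob_eq_expected_utility[where M = M and R = "\<lambda>_. True"]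
    policy_value_const[OF assms, where ss = "[init M]" and as = "[]" and n = T and c = 1]
  by (simp add: expected_utility_eq_policy_value)

subsection \<open>Quantiles of a distribution on a finite chain\<close>

locale finite_total_order =
  fixes W :: "'w set" and le :: "'w \<Rightarrow> 'w \<Rightarrow> bool"
  assumes finite: "finite W" and nonempty: "W \<noteq> {}"
    and le_antisym: "\<And>x y. x \<in> W \<Longrightarrow> y \<in> W \<Longrightarrow> le x y \<Longrightarrow> le y x \<Longrightarrow> x = y"
    and le_trans: "\<And>x y z. x \<in> W \<Longrightarrow> y \<in> W \<Longrightarrow> z \<in> W \<Longrightarrow> le x y \<Longrightarrow> le y z \<Longrightarrow> le x z"
    and le_total: "\<And>x y. x \<in> W \<Longrightarrow> y \<in> W \<Longrightarrow> le x y \<or> le y x"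
begin

lemma le_refl: "x \<in> W \<Longrightarrow> le x x"
  using le_total by blast

lemma has_greatest: "C \<subseteq> W \<Longrightarrow> C \<noteq> {} \<Longrightarrow> \<exists>m\<in>C. \<forall>x\<in>C. le x m"
proof (induction C rule: infinite_finite_induct)
  case (infinite C)
  then show ?case using finite finite_subset by blast
next
  case (insert x C)
  show ?case
  proof (cases "C = {}")
    case False
    then obtain m where "m \<in> C" "\<forall>y\<in>C. le y m"
      using insert by auto
    then show ?thesis
      using insert.prems le_total[of x m] le_trans[of _ m x] le_refl[of x] by (cases "le m x") auto
  qed (use insert.prems le_refl in auto)
qed simp

lemma has_least: "C \<subseteq> W \<Longrightarrow> C \<noteq> {} \<Longrightarrow> \<exists>m\<in>C. \<forall>x\<in>C. le m x"
proof -
  interpret dual: finite_total_order W "\<lambda>x y. le y x"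
    by unfold_locales (use finite nonempty le_antisym le_trans le_total in blast)+
  show "C \<subseteq> W \<Longrightarrow> C \<noteq> {} \<Longrightarrow> \<exists>m\<in>C. \<forall>x\<in>C. le m x"
    by (rule dual.has_greatest)
qed

lemma lower_quantile_characterization:
  fixes p :: "'w \<Rightarrow> real"
  assumes p_nonneg: "\<And>w. w \<in> W \<Longrightarrow> 0 \<le> p w" and p_sum: "sum p W = 1" and \<tau>: "0 < \<tau>" "\<tau> \<le> 1"
  defines "q \<equiv> THE q. q \<in> W \<and> \<tau> \<le> (\<Sum>w\<in>{w\<in>W. le w q}. p w) \<and>
      (\<forall>v\<in>W. \<tau> \<le> (\<Sum>w\<in>{w\<in>W. le w v}. p w) \<longrightarrow> le q v)"
  shows "q \<in> W" and "v \<in> W \<Longrightarrow> le v q \<longleftrightarrow> (\<Sum>w\<in>{w\<in>W. le w v \<and> w \<noteq> v}. p w) < \<tau>"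
proof -
  let ?F = "\<lambda>v. \<Sum>w\<in>{w\<in>W. le w v}. p w"
  let ?C = "{v\<in>W. \<tau> \<le> ?F v}"
  obtain m where m: "m \<in> W" "\<forall>x\<in>W. le x m"
    using has_greatest[OF order_refl nonempty] by blast
  then have "{w\<in>W. le w m} = W" by auto
  then have "m \<in> ?C" using m p_sum \<tau> by simp
  then obtain q0 where q0: "q0 \<in> ?C" "\<forall>x\<in>?C. le q0 x"
    using has_least[of ?C] by blast
  have "q = q0"
    unfolding q_def by (rule the_equality) (use q0 le_antisym in auto)
  then have q: "q \<in> W" "\<tau> \<le> ?F q" "\<And>v. v \<in> W \<Longrightarrow> \<tau> \<le> ?F v \<Longrightarrow> le q v"
    using q0 by auto
  then show "q \<in> W" by simp
  assume v: "v \<in> W"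
  let ?S = "{w\<in>W. le w v \<and> w \<noteq> v}"
  show "le v q \<longleftrightarrow> sum p ?S < \<tau>"
  proof
    assume "le v q"
    show "sum p ?S < \<tau>"
    proof (cases "?S = {}")
      case True
      then show ?thesis using \<tau> by (simp only: sum.empty)
    next
      case False
      then obtain m where m: "m \<in> ?S" "\<forall>x\<in>?S. le x m"
        using has_greatest[of ?S] by blast
      then have "{w\<in>W. le w m} = ?S"
        using m v le_trans[of _ m v] le_antisym[of m v] by blast
      moreover have "\<not> le q m"
        using m v \<open>le v q\<close> q(1) le_trans[of v q m] le_antisym[of m v] by blast
      ultimately show ?thesis
        using q(3) m(1) by fastforce
    qed
  next
    assume S: "sum p ?S < \<tau>"
    show "le v q"
    proof (rule ccontr)
      assume "\<not> le v q"
      then have "{w\<in>W. le w q} \<subseteq> ?S"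
        using v q(1) le_total[of q v] le_trans[of _ q v] by auto
      then have "?F q \<le> sum p ?S"
        by (intro sum_mono2) (use finite p_nonneg in auto)
      then show False using q(2) S by linarith
    qed
  qed
qed

lemma upper_quantile_characterization:
  fixes p :: "'w \<Rightarrow> real"
  assumes p_nonneg: "\<And>w. w \<in> W \<Longrightarrow> 0 \<le> p w" and p_sum: "sum p W = 1" and \<tau>: "0 \<le> \<tau>"
  defines "q \<equiv> THE q. q \<in> W \<and> 1 - \<tau> \<le> (\<Sum>w\<in>{w\<in>W. le q w}. p w) \<and>
      (\<forall>v\<in>W. 1 - \<tau> \<le> (\<Sum>w\<in>{w\<in>W. le v w}. p w) \<longrightarrow> le v q)"
  shows "q \<in> W" and "v \<in> W \<Longrightarrow> le v q \<longleftrightarrow> 1 - \<tau> \<le> (\<Sum>w\<in>{w\<in>W. le v w}. p w)"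
proof -
  let ?G = "\<lambda>v. \<Sum>w\<in>{w\<in>W. le v w}. p w"
  let ?C = "{v\<in>W. 1 - \<tau> \<le> ?G v}"
  obtain m where m: "m \<in> W" "\<forall>x\<in>W. le m x"
    using has_least[OF order_refl nonempty] by blast
  then have "{w\<in>W. le m w} = W" by auto
  then have "m \<in> ?C" using m p_sum \<tau> by simp
  then obtain q0 where q0: "q0 \<in> ?C" "\<forall>x\<in>?C. le x q0"
    using has_greatest[of ?C] by blast
  have "q = q0"
    unfolding q_def by (rule the_equality) (use q0 le_antisym in auto)
  then have q: "q \<in> W" "1 - \<tau> \<le> ?G q" "\<And>v. v \<in> W \<Longrightarrow> 1 - \<tau> \<le> ?G v \<Longrightarrow> le v q"
    using q0 by auto
  then show "q \<in> W" by simp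
  assume v: "v \<in> W"
  show "le v q \<longleftrightarrow> 1 - \<tau> \<le> ?G v"
  proof
    assume "le v q"
    then have "{w\<in>W. le q w} \<subseteq> {w\<in>W. le v w}"
      using v q(1) le_trans[of v q] by auto
    then have "?G q \<le> ?G v"
      by (intro sum_mono2) (use finite p_nonneg in auto)
    then show "1 - \<tau> \<le> ?G v" using q(2) by linarith
  qed (use q(3) v in blast)
qed

end

subsection \<open>Quantile-optimal policies\<close>

lemma finite_total_order_wealth_levels:
  fixes M :: "('s::finite, 'a::finite, 'r) mdp"
  assumes "wealth_order_ok M T"
  shows "finite_total_order (wealth_levels M T) (leW M)"
proof
  show "finite (wealth_levels M T)"
    unfolding wealth_levels_def by (intro finite_imageI finite_histories)
qed (use assms in \<open>unfold wealth_order_ok_def Let_def, blast+\<close>)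

lemma lower_quantile_wealth_level:
  fixes M :: "('s::finite, 'a::finite, 'r) mdp"
  assumes "valid_mdp M" "wealth_order_ok M T" "valid_policy T \<pi>" "0 < \<tau>" "\<tau> \<le> 1"
  shows "lower_quantile M T \<pi> \<tau> \<in> wealth_levels M T"
    and "v \<in> wealth_levels M T \<Longrightarrow> leW M v (lower_quantile M T \<pi> \<tau>) \<longleftrightarrow>
      expected_utility M T \<pi> (\<lambda>w. if leW M w v \<and> w \<noteq> v then 1 else 0) < \<tau>"
proof -
  interpret finite_total_order "wealth_levels M T" "leW M"
    using assms(2) by (rule finite_total_order_wealth_levels)
  note lq = lower_quantile_characterization[of "wprob M T \<pi>" \<tau>,
      OF wprob_nonneg[OF assms(1,3)] sum_wprob_eq_1[OF assms(1,3)] assms(4,5)]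
  show "lower_quantile M T \<pi> \<tau> \<in> wealth_levels M T"
    unfolding lower_quantile_def cdfW_def by (rule lq(1))
  show "v \<in> wealth_levels M T \<Longrightarrow> leW M v (lower_quantile M T \<pi> \<tau>) \<longleftrightarrow>
      expected_utility M T \<pi> (\<lambda>w. if leW M w v \<and> w \<noteq> v then 1 else 0) < \<tau>"
    unfolding lower_quantile_def cdfW_def sum_wprob_eq_expected_utility[symmetric] by (rule lq(2))
qed

lemma upper_quantile_wealth_level:
  fixes M :: "('s::finite, 'a::finite, 'r) mdp"
  assumes "valid_mdp M" "wealth_order_ok M T" "valid_policy T \<pi>" "0 \<le> \<tau>"
  shows "upper_quantile M T \<pi> \<tau> \<in> wealth_levels M T"
    and "v \<in> wealth_levels M T \<Longrightarrow> leW M v (upper_quantile M T \<pi> \<tau>) \<longleftrightarrow>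
      1 - \<tau> \<le> expected_utility M T \<pi> (\<lambda>w. if leW M v w then 1 else 0)"
proof -
  interpret finite_total_order "wealth_levels M T" "leW M"
    using assms(2) by (rule finite_total_order_wealth_levels)
  note uq = upper_quantile_characterization[of "wprob M T \<pi>" \<tau>,
      OF wprob_nonneg[OF assms(1,3)] sum_wprob_eq_1[OF assms(1,3)] assms(4)]
  show "upper_quantile M T \<pi> \<tau> \<in> wealth_levels M T"
    unfolding upper_quantile_def ccdfW_def by (rule uq(1))
  show "v \<in> wealth_levels M T \<Longrightarrow> leW M v (upper_quantile M T \<pi> \<tau>) \<longleftrightarrow>
      1 - \<tau> \<le> expected_utility M T \<pi> (\<lambda>w. if leW M v w then 1 else 0)"
    unfolding upper_quantile_def ccdfW_def sum_wprob_eq_expected_utility[symmetric] by (rule uq(2))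
qed

lemma exists_det_wealth_markov_maximizer:
  fixes M :: "('s::finite, 'a::finite, 'r) mdp" and Q :: "('s, 'a) policy \<Rightarrow> 'r"
  assumes M: "valid_mdp M" "wealth_order_ok M T"
    and Q_in: "\<And>\<pi>. valid_policy T \<pi> \<Longrightarrow> Q \<pi> \<in> wealth_levels M T"
    and le_Q_iff: "\<And>\<pi> v. valid_policy T \<pi> \<Longrightarrow> v \<in> wealth_levels M T \<Longrightarrow>
      leW M v (Q \<pi>) \<longleftrightarrow> P (expected_utility M T \<pi> (f v))"
    and "mono P"
  shows "\<exists>\<pi>. det_wealth_markov M T \<pi> \<and> valid_policy T \<pi> \<and>
    (\<forall>\<pi>'. valid_policy T \<pi>' \<longrightarrow> leW M (Q \<pi>') (Q \<pi>))"
proof -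
  interpret finite_total_order "wealth_levels M T" "leW M"
    using M(2) by (rule finite_total_order_wealth_levels)
  have "Q ` {\<pi>. valid_policy T \<pi>} \<subseteq> wealth_levels M T" "Q ` {\<pi>. valid_policy T \<pi>} \<noteq> {}"
    using Q_in greedy_policy_valid by blast+
  from has_greatest[OF this] obtain \<pi>0
    where \<pi>0: "valid_policy T \<pi>0" "\<And>\<pi>. valid_policy T \<pi> \<Longrightarrow> leW M (Q \<pi>) (Q \<pi>0)"
    by auto
  let ?\<pi> = "greedy_policy M (f (Q \<pi>0)) T"
  have "P (expected_utility M T \<pi>0 (f (Q \<pi>0)))"
    using le_Q_iff[OF \<pi>0(1) Q_in] le_refl Q_in \<pi>0(1) by blast
  then have "P (expected_utility M T ?\<pi> (f (Q \<pi>0)))"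
    using monoD[OF \<open>mono P\<close> greedy_policy_maximizes_expected_utility[OF M(1) \<pi>0(1)]] by simp
  then have "leW M (Q \<pi>0) (Q ?\<pi>)"
    using le_Q_iff[OF greedy_policy_valid Q_in[OF \<pi>0(1)]] by blast
  show ?thesis
  proof (intro exI conjI allI impI)
    fix \<pi>' :: "('s, 'a) policy"
    assume "valid_policy T \<pi>'"
    with \<open>leW M (Q \<pi>0) (Q ?\<pi>)\<close> show "leW M (Q \<pi>') (Q ?\<pi>)"
      by (intro le_trans[of "Q \<pi>'" "Q \<pi>0" "Q ?\<pi>"] Q_in \<pi>0 greedy_policy_valid)
  qed (rule greedy_policy_det_wealth_markov greedy_policy_valid)+
qed

theorem proposition2:
  fixes M :: "('s::finite, 'a::finite, 'r) mdp" and T :: nat and \<tau> :: real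
  assumes "valid_mdp M"
    and "wealth_order_ok M T"
  shows "(0 < \<tau> \<and> \<tau> \<le> 1 \<longrightarrow>
            (\<exists>\<pi>. det_wealth_markov M T \<pi> \<and> lower_optimal M T \<tau> \<pi>)) \<and>
         (0 \<le> \<tau> \<and> \<tau> < 1 \<longrightarrow>
            (\<exists>\<pi>. det_wealth_markov M T \<pi> \<and> upper_optimal M T \<tau> \<pi>))"
proof (intro conjI impI)
  assume "0 < \<tau> \<and> \<tau> \<le> 1"
  then have "\<exists>\<pi>. det_wealth_markov M T \<pi> \<and> valid_policy T \<pi> \<and>
      (\<forall>\<pi>'. valid_policy T \<pi>' \<longrightarrow> leW M (lower_quantile M T \<pi>' \<tau>) (lower_quantile M T \<pi> \<tau>))"
    using lower_quantile_wealth_level[OF assms]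
    by (intro exists_det_wealth_markov_maximizer[OF assms, where P = "\<lambda>x. - \<tau> < x"
          and f = "\<lambda>v w. - (if leW M w v \<and> w \<noteq> v then 1 else 0)"])
      (auto simp: expected_utility_uminus mono_def)
  then show "\<exists>\<pi>. det_wealth_markov M T \<pi> \<and> lower_optimal M T \<tau> \<pi>"
    unfolding lower_optimal_def by blast
next
  assume "0 \<le> \<tau> \<and> \<tau> < 1"
  then have "\<exists>\<pi>. det_wealth_markov M T \<pi> \<and> valid_policy T \<pi> \<and>
      (\<forall>\<pi>'. valid_policy T \<pi>' \<longrightarrow> leW M (upper_quantile M T \<pi>' \<tau>) (upper_quantile M T \<pi> \<tau>))"
    using upper_quantile_wealth_level[OF assms]
    by (intro exists_det_wealth_markov_maximizer[OF assms, where P = "\<lambda>x. 1 - \<tau> \<le> x"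
          and f = "\<lambda>v w. if leW M v w then 1 else 0"])
      (auto simp: mono_def)
  then show "\<exists>\<pi>. det_wealth_markov M T \<pi> \<and> upper_optimal M T \<tau> \<pi>"
    unfolding upper_optimal_def by blast
qed

end
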